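(* Let $H$ be a separable real Hilbert space with norm $\|\cdot\|$. Let $(Y,X)$ be a random pair in $H\times\mathbb{R}$ where $X$ has a probability density $p$, and let $\mu_x$ be the conditional law of $Y$ given $X=x$. Assume: (A2) $p$ is bounded and there are $\beta>0$, $C_2>0$ with $|p(x)-p(x')|\le C_2|x-x'|^\beta$ for all $x,x'\in\mathbb{R}$; (A4) each $\mu_x$ has a finite second moment and there is $C_4$ with $\mathcal{W}_2(\mu_x,\mu_{x'})\le C_4|x-x'|^\beta$ for all $x,x'$; (A6) there is $C_6$ such that $\mathbb{E}[\|Y-\alpha\|^{-2}\mid X=x]\le C_6$ for all $\alpha\in H$ and all $x$. Let $\Phi(x,\alpha)=-p(x)\,\mathbb{E}\big[\frac{Y-\alpha}{\|Y-\alpha\|}\,\big|\,X=x\big]$. Then there is a constant $C_3>0$ such that $$\|\Phi(x,\alpha)-\Phi(x',\alpha)\|\le C_3|x-x'|^\beta\quad\text{for all }x,x'\in\mathbb{R}\text{ and all }\alpha\in H.$$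
   Context: For probability measures $\mu,\nu$ on $H$ with finite second moments, $\mathcal{W}_2(\mu,\nu)=\big(\inf_\pi\int\|y-y'\|^2\,d\pi(y,y')\big)^{1/2}$, the infimum over all couplings $\pi$ of $\mu$ and $\nu$. *)

theory Defs
  imports "HOL-Probability.Probability"
begin

definition couplings :: "'a::topological_space measure \<Rightarrow> 'a measure \<Rightarrow> ('a \<times> 'a) measure set" where
  "couplings \<mu> \<nu> = {\<pi>. prob_space \<pi> \<and> sets \<pi> = sets (borel \<Otimes>\<^sub>M borel)
      \<and> distr \<pi> borel fst = \<mu> \<and> distr \<pi> borel snd = \<nu>}"

definition W2 :: "'a::{real_normed_vector, second_countable_topology} measure \<Rightarrow> 'a measure \<Rightarrow> real" where
  "W2 \<mu> \<nu> = sqrt (Inf ((\<lambda>\<pi>. \<integral>z. (norm (fst z - snd z))\<^sup>2 \<partial>\<pi>) ` couplings \<mu> \<nu>))"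

definition finite_second_moment :: "'a::real_normed_vector measure \<Rightarrow> bool" where
  "finite_second_moment \<mu> \<longleftrightarrow> prob_space \<mu> \<and> sets \<mu> = sets borel \<and> integrable \<mu> (\<lambda>y. (norm y)\<^sup>2)"

text \<open>\<Phi>(x,\<alpha>) = - p(x) E[(Y-\<alpha>)/||Y-\<alpha>|| | X=x], with \<mu> x the conditional law of Y given X = x.\<close>
definition Phi :: "(real \<Rightarrow> real) \<Rightarrow> (real \<Rightarrow> 'a::{real_normed_vector, second_countable_topology} measure)
    \<Rightarrow> real \<Rightarrow> 'a \<Rightarrow> 'a" where
  "Phi p \<mu> x \<alpha> = - (p x *\<^sub>R (\<integral>y. (1 / norm (y - \<alpha>)) *\<^sub>R (y - \<alpha>) \<partial>(\<mu> x)))"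

end

theory Submission
  imports Defs
begin

text \<open>
  Write \<open>\<Phi>(x,\<alpha>) = -p(x) E(x)\<close> with \<open>E(x) = \<integral> sgn (y - \<alpha>) d\<mu>\<^sub>x(y)\<close>. Since \<open>\<parallel>E(x)\<parallel> \<le> 1\<close>,
  \<open>\<parallel>\<Phi>(x,\<alpha>) - \<Phi>(x',\<alpha>)\<parallel> \<le> |p(x) - p(x')| + \<parallel>p\<parallel>\<^sub>\<infinity> \<parallel>E(x) - E(x')\<parallel>\<close>, so it suffices to bound
  \<open>\<parallel>E(x) - E(x')\<parallel>\<close> by a multiple of \<open>\<W>\<^sub>2(\<mu>\<^sub>x, \<mu>\<^sub>x')\<close>. For unit vectors,
  \<open>\<parallel>sgn a - sgn b\<parallel> \<le> 2\<parallel>a - b\<parallel>/\<parallel>a\<parallel> \<le> t\<parallel>a - b\<parallel>\<^sup>2 + 1/(t\<parallel>a\<parallel>\<^sup>2)\<close> for every \<open>t > 0\<close>.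
  Integrating against any coupling \<open>\<pi>\<close> of \<open>\<mu>\<^sub>x\<close> and \<open>\<mu>\<^sub>x'\<close> and using (A6) gives
  \<open>\<parallel>E(x) - E(x')\<parallel> \<le> t \<integral>\<parallel>y - y'\<parallel>\<^sup>2 d\<pi> + C\<^sub>6/t\<close>; taking the infimum over \<open>\<pi>\<close> and
  optimising in \<open>t\<close> yields \<open>\<parallel>E(x) - E(x')\<parallel> \<le> 2\<surd>C\<^sub>6 \<W>\<^sub>2(\<mu>\<^sub>x, \<mu>\<^sub>x')\<close>.
\<close>

definition mean_direction :: "'a::{real_normed_vector, second_countable_topology} measure \<Rightarrow> 'a \<Rightarrow> 'a" where
  "mean_direction M \<alpha> = (\<integral>y. sgn (y - \<alpha>) \<partial>M)"

definition inverse_sq_dist :: "'a::real_normed_vector \<Rightarrow> 'a \<Rightarrow> ennreal" where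
  "inverse_sq_dist \<alpha> y = (if y = \<alpha> then \<infinity> else ennreal (1 / (norm (y - \<alpha>))\<^sup>2))"

lemma Phi_eq_mean_direction: "Phi p \<mu> x \<alpha> = - (p x *\<^sub>R mean_direction (\<mu> x) \<alpha>)"
  by (simp add: Phi_def mean_direction_def sgn_div_norm divide_inverse)

lemma inverse_sq_dist_measurable [measurable]:
  "inverse_sq_dist \<alpha> \<in> borel_measurable (borel :: 'a::{real_normed_vector, second_countable_topology} measure)"
  unfolding inverse_sq_dist_def by measurable

lemma norm_sgn_diff_le:
  fixes a b :: "'a::real_normed_vector"
  assumes "a \<noteq> 0"
  shows "norm (sgn a - sgn b) \<le> 2 * norm (a - b) / norm a"
proof (cases "b = 0")
  case True
  then show ?thesis using assms by (simp add: norm_sgn)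
next
  case False
  have na: "norm a > 0" using assms by simp
  have "1 / norm a = 1 / norm b + (norm b - norm a) / norm a * (1 / norm b)"
    using assms False by (simp add: field_simps)
  then have "(1 / norm a) *\<^sub>R b = (1 / norm b) *\<^sub>R b + ((norm b - norm a) / norm a) *\<^sub>R ((1 / norm b) *\<^sub>R b)"
    by (simp only: scaleR_scaleR flip: scaleR_left_distrib)
  then have eq: "sgn a - sgn b = (1 / norm a) *\<^sub>R (a - b) + ((norm b - norm a) / norm a) *\<^sub>R sgn b"
    by (simp add: sgn_div_norm divide_inverse scaleR_diff_right)
  have "norm (sgn a - sgn b)
      \<le> norm ((1 / norm a) *\<^sub>R (a - b)) + norm (((norm b - norm a) / norm a) *\<^sub>R sgn b)"
    unfolding eq by (rule norm_triangle_ineq)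
  also have "\<dots> = norm (a - b) / norm a + \<bar>norm b - norm a\<bar> / norm a"
    using na False by (simp add: norm_sgn)
  also have "\<bar>norm b - norm a\<bar> \<le> norm (a - b)"
    by (metis norm_minus_commute norm_triangle_ineq3)
  then have "\<bar>norm b - norm a\<bar> / norm a \<le> norm (a - b) / norm a"
    using na by (simp add: divide_right_mono)
  finally show ?thesis by simp
qed

lemma norm_sgn_diff_le_young:
  fixes y y' \<alpha> :: "'a::real_normed_vector"
  assumes t: "t > 0"
  shows "ennreal (norm (sgn (y - \<alpha>) - sgn (y' - \<alpha>)))
    \<le> ennreal (t * (norm (y - y'))\<^sup>2) + ennreal (1 / t) * inverse_sq_dist \<alpha> y"
proof (cases "y = \<alpha>")
  case True
  then show ?thesis using t by (simp add: inverse_sq_dist_def ennreal_mult_top)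
next
  case False
  define n where "n = norm (y - \<alpha>)"
  define d where "d = norm (y - y')"
  have n: "n > 0" using False by (simp add: n_def)
  have "norm (sgn (y - \<alpha>) - sgn (y' - \<alpha>)) \<le> 2 * d / n"
    using norm_sgn_diff_le[of "y - \<alpha>" "y' - \<alpha>"] False by (simp add: n_def d_def)
  also have "\<dots> \<le> t * d\<^sup>2 + (1 / t) * (1 / n\<^sup>2)"
  proof -
    have "0 \<le> (1 / t) * (t * d - 1 / n)\<^sup>2" using t by simp
    also have "\<dots> = t * d\<^sup>2 + (1 / t) * (1 / n\<^sup>2) - 2 * d / n"
      using t n by (simp add: power2_eq_square field_simps)
    finally show ?thesis by simp
  qed
  finally show ?thesis
    using t False by (simp add: inverse_sq_dist_def n_def d_def ennreal_mult[symmetric] ennreal_plus[symmetric]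
        del: ennreal_plus)
qed

lemma norm_integral_le_nn_integral_norm:
  fixes f :: "'b \<Rightarrow> 'a::{banach, second_countable_topology}"
  shows "norm (integral\<^sup>L M f) \<le> (\<integral>\<^sup>+x. norm (f x) \<partial>M)"
  by (cases "integrable M f") (auto simp: integral_norm_bound_ennreal not_integrable_integral_eq)

lemma norm_mean_direction_le_1:
  fixes M :: "'a::{banach, second_countable_topology} measure"
  assumes "prob_space M"
  shows "norm (mean_direction M \<alpha>) \<le> 1"
proof -
  interpret prob_space M by (rule assms)
  have "ennreal (norm (mean_direction M \<alpha>)) \<le> (\<integral>\<^sup>+y. norm (sgn (y - \<alpha>)) \<partial>M)"
    unfolding mean_direction_def by (rule norm_integral_le_nn_integral_norm)
  also have "\<dots> \<le> (\<integral>\<^sup>+y. 1 \<partial>M)"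
    by (intro nn_integral_mono) (simp add: norm_sgn)
  finally show ?thesis by (simp add: emeasure_space_1)
qed

lemma pair_measure_in_couplings:
  assumes "prob_space M" and sM: "sets M = sets borel"
    and "prob_space N" and sN: "sets N = sets borel"
  shows "M \<Otimes>\<^sub>M N \<in> couplings M N"
proof -
  interpret M: prob_space M by fact
  interpret N: prob_space N by fact
  interpret pair_prob_space M N ..
  have "distr (M \<Otimes>\<^sub>M N) borel fst = distr (M \<Otimes>\<^sub>M N) M fst"
    using sM by (intro distr_cong) simp_all
  also have "\<dots> = M" by (rule N.distr_pair_fst)
  finally have fst: "distr (M \<Otimes>\<^sub>M N) borel fst = M" .
  have "distr (M \<Otimes>\<^sub>M N) borel snd = distr (distr (N \<Otimes>\<^sub>M M) (M \<Otimes>\<^sub>M N) (\<lambda>(x, y). (y, x))) N snd"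
    using sN by (subst distr_pair_swap[symmetric]) (intro distr_cong; simp)
  also have "\<dots> = distr (N \<Otimes>\<^sub>M M) N fst"
    by (subst distr_distr) (auto simp: comp_def split_beta cong: distr_cong)
  also have "\<dots> = N" by (rule M.distr_pair_fst)
  finally have snd: "distr (M \<Otimes>\<^sub>M N) borel snd = N" .
  show ?thesis
    using fst snd prob_space_axioms sets_pair_measure_cong[OF sM sN] by (simp add: couplings_def)
qed

lemma measurable_coupling:
  assumes "\<pi> \<in> couplings M N"
  shows "fst \<in> measurable \<pi> borel" and "snd \<in> measurable \<pi> borel"
proof -
  have sets_eq: "sets \<pi> = sets (borel \<Otimes>\<^sub>M borel)" using assms by (simp add: couplings_def)
  show "fst \<in> measurable \<pi> borel" and "snd \<in> measurable \<pi> borel"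
    by (simp_all add: measurable_cong_sets[OF sets_eq refl])
qed

lemma integrable_coupling_norm_diff_sq:
  fixes M N :: "'a::{banach, second_countable_topology} measure"
  assumes M: "finite_second_moment M" and N: "finite_second_moment N"
    and \<pi>: "\<pi> \<in> couplings M N"
  shows "integrable \<pi> (\<lambda>z. (norm (fst z - snd z))\<^sup>2)"
proof (rule Bochner_Integration.integrable_bound)
  have sq_meas: "(\<lambda>y::'a. (norm y)\<^sup>2) \<in> borel_measurable borel" by measurable
  have "integrable \<pi> (\<lambda>z. (norm (fst z))\<^sup>2)" "integrable \<pi> (\<lambda>z. (norm (snd z))\<^sup>2)"
    using M N \<pi> integrable_distr_eq[OF measurable_coupling(1)[OF \<pi>] sq_meas]
      integrable_distr_eq[OF measurable_coupling(2)[OF \<pi>] sq_meas]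
    by (simp_all add: finite_second_moment_def couplings_def)
  then show "integrable \<pi> (\<lambda>z. 2 * (norm (fst z))\<^sup>2 + 2 * (norm (snd z))\<^sup>2)"
    by auto
  note [measurable] = measurable_coupling[OF \<pi>]
  show "(\<lambda>z. (norm (fst z - snd z))\<^sup>2) \<in> borel_measurable \<pi>"
    by measurable
  have "(norm (x - y))\<^sup>2 \<le> 2 * (norm x)\<^sup>2 + 2 * (norm y)\<^sup>2" for x y :: 'a
  proof -
    have "(norm (x - y))\<^sup>2 \<le> (norm x + norm y)\<^sup>2"
      by (rule power_mono[OF norm_triangle_ineq4]) simp
    also have "\<dots> \<le> (norm x + norm y)\<^sup>2 + (norm x - norm y)\<^sup>2"
      by simp
    also have "\<dots> = 2 * (norm x)\<^sup>2 + 2 * (norm y)\<^sup>2"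
      by (simp add: power2_eq_square algebra_simps)
    finally show ?thesis .
  qed
  then show "AE z in \<pi>. norm ((norm (fst z - snd z))\<^sup>2) \<le> norm (2 * (norm (fst z))\<^sup>2 + 2 * (norm (snd z))\<^sup>2)"
    by simp
qed

lemma norm_mean_direction_diff_le_coupling:
  fixes M N :: "'a::{banach, second_countable_topology} measure"
  assumes M: "finite_second_moment M" and N: "finite_second_moment N"
    and \<pi>: "\<pi> \<in> couplings M N"
    and inv_sq: "(\<integral>\<^sup>+y. inverse_sq_dist \<alpha> y \<partial>M) \<le> ennreal C"
    and C: "C \<ge> 0" and t: "t > 0"
  shows "norm (mean_direction M \<alpha> - mean_direction N \<alpha>)
    \<le> t * (\<integral>z. (norm (fst z - snd z))\<^sup>2 \<partial>\<pi>) + C / t"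
proof -
  interpret prob_space \<pi> using \<pi> by (simp add: couplings_def)
  have M_eq: "distr \<pi> borel fst = M" and N_eq: "distr \<pi> borel snd = N"
    using \<pi> by (simp_all add: couplings_def)
  note [measurable] = measurable_coupling[OF \<pi>]
  have int_sgn: "integrable \<pi> (\<lambda>z. sgn (f z - \<alpha>))" if [measurable]: "f \<in> borel_measurable \<pi>" for f
    by (rule integrable_const_bound[where B=1]) (auto simp: norm_sgn)
  define D where "D = (\<integral>z. (norm (fst z - snd z))\<^sup>2 \<partial>\<pi>)"
  have D: "D \<ge> 0" unfolding D_def by (rule Bochner_Integration.integral_nonneg) simp
  have "mean_direction M \<alpha> - mean_direction N \<alpha> = (\<integral>z. sgn (fst z - \<alpha>) - sgn (snd z - \<alpha>) \<partial>\<pi>)"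
    unfolding mean_direction_def M_eq[symmetric] N_eq[symmetric]
    by (simp add: integral_distr Bochner_Integration.integral_diff int_sgn)
  then have "ennreal (norm (mean_direction M \<alpha> - mean_direction N \<alpha>))
      \<le> (\<integral>\<^sup>+z. norm (sgn (fst z - \<alpha>) - sgn (snd z - \<alpha>)) \<partial>\<pi>)"
    by (simp add: norm_integral_le_nn_integral_norm)
  also have "\<dots> \<le> (\<integral>\<^sup>+z. ennreal (t * (norm (fst z - snd z))\<^sup>2)
      + ennreal (1 / t) * inverse_sq_dist \<alpha> (fst z) \<partial>\<pi>)"
    by (intro nn_integral_mono norm_sgn_diff_le_young t)
  also have "\<dots> = (\<integral>\<^sup>+z. ennreal (t * (norm (fst z - snd z))\<^sup>2) \<partial>\<pi>)
      + ennreal (1 / t) * (\<integral>\<^sup>+z. inverse_sq_dist \<alpha> (fst z) \<partial>\<pi>)"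
    by (simp add: nn_integral_add nn_integral_cmult)
  also have "(\<integral>\<^sup>+z. ennreal (t * (norm (fst z - snd z))\<^sup>2) \<partial>\<pi>) = ennreal (t * D)"
    using integrable_coupling_norm_diff_sq[OF M N \<pi>] t
    by (subst nn_integral_eq_integral) (auto simp: D_def)
  also have "(\<integral>\<^sup>+z. inverse_sq_dist \<alpha> (fst z) \<partial>\<pi>) = (\<integral>\<^sup>+y. inverse_sq_dist \<alpha> y \<partial>M)"
    unfolding M_eq[symmetric] by (simp add: nn_integral_distr)
  also have "ennreal (t * D) + ennreal (1 / t) * (\<integral>\<^sup>+y. inverse_sq_dist \<alpha> y \<partial>M)
      \<le> ennreal (t * D) + ennreal (1 / t) * ennreal C"
    using inv_sq by (intro add_left_mono mult_left_mono) auto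
  also have "\<dots> = ennreal (t * D + C / t)"
    using t C D by (simp add: ennreal_mult[symmetric] ennreal_plus)
  finally show ?thesis
    using t C D by (subst (asm) ennreal_le_iff) (auto simp: D_def)
qed

lemma le_two_sqrt_mult_sqrt_if_le_mult_add_divide:
  fixes c C I :: real
  assumes C: "C > 0" and I: "I \<ge> 0" and le: "\<And>t. t > 0 \<Longrightarrow> c \<le> t * I + C / t"
  shows "c \<le> 2 * sqrt C * sqrt I"
proof (cases "I = 0")
  case True
  show ?thesis
  proof (rule ccontr)
    assume "\<not> ?thesis"
    then have c: "c > 0" using True by simp
    have "c \<le> (2 * C / c) * I + C / (2 * C / c)" by (rule le) (use c C in simp)
    also have "\<dots> = c / 2" using True c C by simp
    finally show False using c by simp
  qed
next
  case False
  define a where "a = sqrt C"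
  define b where "b = sqrt I"
  have a: "a > 0" and b: "b > 0" using C I False by (simp_all add: a_def b_def)
  have "C = a * a" "I = b * b" using C I by (simp_all add: a_def b_def)
  have "c \<le> (a / b) * I + C / (a / b)" by (rule le) (use a b in simp)
  also have "\<dots> = 2 * a * b" using a b unfolding \<open>C = a * a\<close> \<open>I = b * b\<close> by (simp add: field_simps)
  finally show ?thesis by (simp add: a_def b_def)
qed

lemma norm_mean_direction_diff_le_W2:
  fixes M N :: "'a::{banach, second_countable_topology} measure"
  assumes M: "finite_second_moment M" and N: "finite_second_moment N"
    and inv_sq: "(\<integral>\<^sup>+y. inverse_sq_dist \<alpha> y \<partial>M) \<le> ennreal C" and C: "C > 0"
  shows "norm (mean_direction M \<alpha> - mean_direction N \<alpha>) \<le> 2 * sqrt C * W2 M N"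
proof -
  define S where "S = (\<lambda>\<pi>. \<integral>z. (norm (fst z - snd z))\<^sup>2 \<partial>\<pi>) ` couplings M N"
  have S: "S \<noteq> {}"
    using M N pair_measure_in_couplings unfolding S_def finite_second_moment_def by blast
  have "0 \<le> Inf S" by (rule cInf_greatest[OF S]) (auto simp: S_def)
  moreover have "norm (mean_direction M \<alpha> - mean_direction N \<alpha>) \<le> t * Inf S + C / t" if t: "t > 0" for t
  proof -
    have "(norm (mean_direction M \<alpha> - mean_direction N \<alpha>) - C / t) / t \<le> Inf S"
    proof (rule cInf_greatest[OF S])
      fix s assume "s \<in> S"
      then obtain \<pi> where \<pi>: "\<pi> \<in> couplings M N" and s: "s = (\<integral>z. (norm (fst z - snd z))\<^sup>2 \<partial>\<pi>)"
        unfolding S_def by blast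
      show "(norm (mean_direction M \<alpha> - mean_direction N \<alpha>) - C / t) / t \<le> s"
        using norm_mean_direction_diff_le_coupling[OF M N \<pi> inv_sq _ t] C t
        by (simp add: s pos_divide_le_eq algebra_simps)
    qed
    then show ?thesis using t by (simp add: pos_divide_le_eq algebra_simps)
  qed
  ultimately show ?thesis
    using le_two_sqrt_mult_sqrt_if_le_mult_add_divide[OF C] by (simp add: W2_def S_def)
qed

lemma norm_Phi_diff_le:
  fixes \<mu> :: "real \<Rightarrow> 'a::{banach, second_countable_topology} measure"
  assumes "prob_space (\<mu> x)"
  shows "norm (Phi p \<mu> x \<alpha> - Phi p \<mu> x' \<alpha>)
    \<le> \<bar>p x - p x'\<bar> + \<bar>p x'\<bar> * norm (mean_direction (\<mu> x) \<alpha> - mean_direction (\<mu> x') \<alpha>)"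
proof -
  have "Phi p \<mu> x \<alpha> - Phi p \<mu> x' \<alpha> = - ((p x - p x') *\<^sub>R mean_direction (\<mu> x) \<alpha>
      + p x' *\<^sub>R (mean_direction (\<mu> x) \<alpha> - mean_direction (\<mu> x') \<alpha>))"
    by (simp add: Phi_eq_mean_direction algebra_simps)
  then have "norm (Phi p \<mu> x \<alpha> - Phi p \<mu> x' \<alpha>)
      \<le> \<bar>p x - p x'\<bar> * norm (mean_direction (\<mu> x) \<alpha>)
        + \<bar>p x'\<bar> * norm (mean_direction (\<mu> x) \<alpha> - mean_direction (\<mu> x') \<alpha>)"
    by (simp only: norm_minus_cancel flip: norm_scaleR) (rule norm_triangle_ineq)
  moreover have "\<bar>p x - p x'\<bar> * norm (mean_direction (\<mu> x) \<alpha>) \<le> \<bar>p x - p x'\<bar>"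
    using norm_mean_direction_le_1[OF assms] by (simp add: mult_left_le)
  ultimately show ?thesis by linarith
qed

theorem mainTheorem5:
  fixes p :: "real \<Rightarrow> real"
    and \<mu> :: "real \<Rightarrow> 'a::{real_inner, banach, second_countable_topology} measure"
    and \<beta> C2 C4 C6 :: real
  assumes p_meas: "p \<in> borel_measurable lborel"
    and p_nonneg: "\<And>x. p x \<ge> 0"
    and p_dens: "(\<integral>\<^sup>+x. ennreal (p x) \<partial>lborel) = 1"
    and A2_bdd: "\<exists>B. \<forall>x. \<bar>p x\<bar> \<le> B"
    and A2_beta: "\<beta> > 0" and A2_C2: "C2 > 0"
    and A2_hoelder: "\<And>x x'. \<bar>p x - p x'\<bar> \<le> C2 * \<bar>x - x'\<bar> powr \<beta>"
    and A4_mom: "\<And>x. finite_second_moment (\<mu> x)"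
    and A4_W2: "\<And>x x'. W2 (\<mu> x) (\<mu> x') \<le> C4 * \<bar>x - x'\<bar> powr \<beta>"
    and A6: "\<And>\<alpha> x. (\<integral>\<^sup>+y. (if y = \<alpha> then \<infinity> else ennreal (1 / (norm (y - \<alpha>))\<^sup>2)) \<partial>(\<mu> x))
                      \<le> ennreal C6"
  shows "\<exists>C3 > 0. \<forall>x x' \<alpha>. norm (Phi p \<mu> x \<alpha> - Phi p \<mu> x' \<alpha>) \<le> C3 * \<bar>x - x'\<bar> powr \<beta>"
proof -
  obtain B where B: "\<And>x. \<bar>p x\<bar> \<le> B"
    using A2_bdd by blast
  have "B \<ge> 0" using B[of 0] by linarith
  define K where "K = 2 * sqrt (max C6 1)"
  have "K > 0" by (simp add: K_def)
  have mean_direction_hoelder: "norm (mean_direction (\<mu> x) \<alpha> - mean_direction (\<mu> x') \<alpha>)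
      \<le> K * \<bar>C4\<bar> * \<bar>x - x'\<bar> powr \<beta>" for x x' :: real and \<alpha> :: 'a
  proof -
    have "(\<integral>\<^sup>+y. inverse_sq_dist \<alpha> y \<partial>\<mu> x) \<le> ennreal (max C6 1)"
      using A6[where \<alpha>=\<alpha> and x=x] by (simp add: inverse_sq_dist_def order_trans[OF _ ennreal_leI])
    then have "norm (mean_direction (\<mu> x) \<alpha> - mean_direction (\<mu> x') \<alpha>) \<le> K * W2 (\<mu> x) (\<mu> x')"
      unfolding K_def by (intro norm_mean_direction_diff_le_W2 A4_mom) simp_all
    also have "\<dots> \<le> K * (\<bar>C4\<bar> * \<bar>x - x'\<bar> powr \<beta>)"
      using order_trans[OF A4_W2 mult_right_mono[OF abs_ge_self]] \<open>K > 0\<close> by (intro mult_left_mono) simp_all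
    finally show ?thesis by (simp add: mult.assoc)
  qed
  show ?thesis
  proof (intro exI[of _ "C2 + B * K * \<bar>C4\<bar>"] conjI allI)
    show "C2 + B * K * \<bar>C4\<bar> > 0" using A2_C2 \<open>B \<ge> 0\<close> \<open>K > 0\<close> by (simp add: add_pos_nonneg)
    fix x x' :: real and \<alpha> :: 'a
    have "prob_space (\<mu> x)" using A4_mom by (simp add: finite_second_moment_def)
    then have "norm (Phi p \<mu> x \<alpha> - Phi p \<mu> x' \<alpha>)
        \<le> \<bar>p x - p x'\<bar> + \<bar>p x'\<bar> * norm (mean_direction (\<mu> x) \<alpha> - mean_direction (\<mu> x') \<alpha>)"
      by (rule norm_Phi_diff_le)
    moreover have "\<bar>p x'\<bar> * norm (mean_direction (\<mu> x) \<alpha> - mean_direction (\<mu> x') \<alpha>)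
        \<le> B * (K * \<bar>C4\<bar> * \<bar>x - x'\<bar> powr \<beta>)"
      using \<open>B \<ge> 0\<close> by (intro mult_mono B mean_direction_hoelder) simp_all
    ultimately have "norm (Phi p \<mu> x \<alpha> - Phi p \<mu> x' \<alpha>)
        \<le> C2 * \<bar>x - x'\<bar> powr \<beta> + B * (K * \<bar>C4\<bar> * \<bar>x - x'\<bar> powr \<beta>)"
      using A2_hoelder[of x x'] by linarith
    then show "norm (Phi p \<mu> x \<alpha> - Phi p \<mu> x' \<alpha>) \<le> (C2 + B * K * \<bar>C4\<bar>) * \<bar>x - x'\<bar> powr \<beta>"
      by (simp add: algebra_simps)
  qed
qed

end
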